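(* A tree $T$ has no full star-cutset if and only if $T$ is a path on at most $4$ vertices. A chandelier has no full star-cutset if and only if it is a luxury chandelier.
   Context: A full star-cutset of a connected graph $G$ is a set $N[u]=\{u\}\cup N(u)$ whose removal disconnects $G$ ($u$ is its center). A chandelier is a graph obtained from a tree $T$ by adding a new vertex adjacent to every leaf of $T$; it is a luxury chandelier if in $T$ the neighbor of each leaf has degree two. *)

theory Defs
  imports Main
begin

definition graph :: "'a set \<Rightarrow> 'a set set \<Rightarrow> bool" where
  "graph V E \<longleftrightarrow> finite V \<and> (\<forall>e\<in>E. \<exists>u v. e = {u, v} \<and> u \<noteq> v \<and> u \<in> V \<and> v \<in> V)"

text \<open>Adjacency inside the vertex set V (so (V - S) E is the induced subgraph G - S).\<close>
definition adj_in :: "'a set \<Rightarrow> 'a set set \<Rightarrow> 'a \<Rightarrow> 'a \<Rightarrow> bool" where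
  "adj_in V E a b \<longleftrightarrow> a \<in> V \<and> b \<in> V \<and> {a, b} \<in> E"

definition connected_graph :: "'a set \<Rightarrow> 'a set set \<Rightarrow> bool" where
  "connected_graph V E \<longleftrightarrow> V \<noteq> {} \<and> (\<forall>x\<in>V. \<forall>y\<in>V. (adj_in V E)\<^sup>*\<^sup>* x y)"

text \<open>Disconnected: at least two vertices in different components (the null graph is not disconnected).\<close>
definition disconnected_graph :: "'a set \<Rightarrow> 'a set set \<Rightarrow> bool" where
  "disconnected_graph V E \<longleftrightarrow> (\<exists>x\<in>V. \<exists>y\<in>V. \<not> (adj_in V E)\<^sup>*\<^sup>* x y)"

definition nbhd :: "'a set \<Rightarrow> 'a set set \<Rightarrow> 'a \<Rightarrow> 'a set" where
  "nbhd V E u = {v \<in> V. {u, v} \<in> E}"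

definition closed_nbhd :: "'a set \<Rightarrow> 'a set set \<Rightarrow> 'a \<Rightarrow> 'a set" where
  "closed_nbhd V E u = insert u (nbhd V E u)"

definition degree :: "'a set \<Rightarrow> 'a set set \<Rightarrow> 'a \<Rightarrow> nat" where
  "degree V E u = card (nbhd V E u)"

definition full_star_cutset :: "'a set \<Rightarrow> 'a set set \<Rightarrow> 'a \<Rightarrow> bool" where
  "full_star_cutset V E u \<longleftrightarrow> connected_graph V E \<and> u \<in> V \<and>
     disconnected_graph (V - closed_nbhd V E u) E"

definition has_full_star_cutset :: "'a set \<Rightarrow> 'a set set \<Rightarrow> bool" where
  "has_full_star_cutset V E \<longleftrightarrow> (\<exists>u\<in>V. full_star_cutset V E u)"

definition acyclic_graph :: "'a set \<Rightarrow> 'a set set \<Rightarrow> bool" where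
  "acyclic_graph V E \<longleftrightarrow> \<not> (\<exists>xs. length xs \<ge> 3 \<and> distinct xs \<and> set xs \<subseteq> V \<and>
      (\<forall>i < length xs. {xs ! i, xs ! ((i + 1) mod length xs)} \<in> E))"

definition tree :: "'a set \<Rightarrow> 'a set set \<Rightarrow> bool" where
  "tree V E \<longleftrightarrow> graph V E \<and> connected_graph V E \<and> acyclic_graph V E"

definition path_graph :: "'a set \<Rightarrow> 'a set set \<Rightarrow> bool" where
  "path_graph V E \<longleftrightarrow> (\<exists>xs. xs \<noteq> [] \<and> distinct xs \<and> set xs = V \<and>
      E = {{xs ! i, xs ! Suc i} | i. Suc i < length xs})"

definition leaves :: "'a set \<Rightarrow> 'a set set \<Rightarrow> 'a set" where
  "leaves V E = {v \<in> V. degree V E v = 1}"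

definition chandelier :: "'a set \<Rightarrow> 'a set set \<Rightarrow> 'a \<Rightarrow> bool" where
  "chandelier V E x \<longleftrightarrow> graph V E \<and> x \<in> V \<and>
     tree (V - {x}) {e \<in> E. x \<notin> e} \<and> card (V - {x}) \<ge> 3 \<and>
     nbhd V E x = leaves (V - {x}) {e \<in> E. x \<notin> e}"

definition luxury_chandelier :: "'a set \<Rightarrow> 'a set set \<Rightarrow> 'a \<Rightarrow> bool" where
  "luxury_chandelier V E x \<longleftrightarrow> chandelier V E x \<and>
     (let T = V - {x}; ET = {e \<in> E. x \<notin> e} in
       \<forall>v \<in> leaves T ET. \<forall>w \<in> nbhd T ET v. degree T ET w = 2)"

end

theory Submission
  imports Defs
begin

text \<open>
  In a tree, a vertex y with three neighbours u, a, b makes N[u] a full star-cutset separating a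
  from b, and a path a-b-c-d-e makes N[c] one separating a from e; so a tree without one has
  maximum degree two and no path on five vertices, i.e. it is a path on at most four vertices.
  Conversely, on at most four vertices whatever survives the removal of a closed neighbourhood
  is at most one edge.

  In a chandelier with apex x over the tree T, a leaf v whose neighbour w has degree at least
  three (degree one is impossible as T has at least three vertices) gives N[v] = {v, w, x},
  which separates two further neighbours of w. In a luxury chandelier nothing disconnects: G - N[x] is T minus its
  leaves, and G - N[v] for a leaf v is T minus v and its neighbour w of degree two; both are
  connected, since a tree path between two remaining vertices cannot pass through a leaf, nor
  through w without passing through v. For any other vertex u, every vertex outside N[u] reaches
  a leaf, hence the apex, without meeting N[u].
\<close>

lemma graph_no_loop: "graph V E \<Longrightarrow> {a, a} \<notin> E"
  unfolding graph_def by (auto simp: doubleton_eq_iff)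

lemma graph_edge_vertices: "graph V E \<Longrightarrow> {a, b} \<in> E \<Longrightarrow> a \<in> V \<and> b \<in> V"
  unfolding graph_def by (auto simp: doubleton_eq_iff)

lemma in_closed_nbhd_iff: "a \<in> closed_nbhd V E u \<longleftrightarrow> a = u \<or> (a \<in> V \<and> {u, a} \<in> E)"
  by (auto simp: closed_nbhd_def nbhd_def)

lemma nbhd_sym: "u \<in> V \<Longrightarrow> w \<in> nbhd V E u \<Longrightarrow> u \<in> nbhd V E w"
  by (auto simp: nbhd_def insert_commute)

lemma leaf_nbhd: "v \<in> leaves V E \<Longrightarrow> \<exists>w. nbhd V E v = {w}"
  by (simp add: leaves_def degree_def card_1_singleton_iff)

lemma adj_in_sym: "adj_in W E a b \<Longrightarrow> adj_in W E b a"
  unfolding adj_in_def by (auto simp: insert_commute)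

lemma reachable_sym: "(adj_in W E)\<^sup>*\<^sup>* a b \<Longrightarrow> (adj_in W E)\<^sup>*\<^sup>* b a"
  by (induction rule: rtranclp_induct) (auto intro: converse_rtranclp_into_rtranclp adj_in_sym)

lemma reachable_mono:
  "W \<subseteq> W' \<Longrightarrow> E \<subseteq> E' \<Longrightarrow> (adj_in W E)\<^sup>*\<^sup>* a b \<Longrightarrow> (adj_in W' E')\<^sup>*\<^sup>* a b"
  by (erule mono_rtranclp[rule_format, rotated]) (auto simp: adj_in_def)

lemma connected_graph_iff: "connected_graph V E \<longleftrightarrow> V \<noteq> {} \<and> \<not> disconnected_graph V E"
  by (auto simp: connected_graph_def disconnected_graph_def)

lemma connected_closed_subset_eq:
  assumes "connected_graph V E" "S \<subseteq> V" "s \<in> S"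
    and closed: "\<And>a b. a \<in> S \<Longrightarrow> b \<in> V \<Longrightarrow> {a, b} \<in> E \<Longrightarrow> b \<in> S"
  shows "S = V"
proof
  show "V \<subseteq> S"
  proof
    fix v assume "v \<in> V"
    then have "(adj_in V E)\<^sup>*\<^sup>* s v" using assms(1-3) by (auto simp: connected_graph_def)
    then show "v \<in> S"
      by (induction rule: rtranclp_induct) (use assms(3) closed in \<open>auto simp: adj_in_def\<close>)
  qed
qed (rule assms(2))

lemma not_disconnected_if_reach_hub:
  "h \<in> W \<Longrightarrow> (\<And>p. p \<in> W \<Longrightarrow> (adj_in W E)\<^sup>*\<^sup>* p h) \<Longrightarrow> \<not> disconnected_graph W E"
  unfolding disconnected_graph_def by (meson reachable_sym rtranclp_trans)

lemma not_disconnected_if_clique: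
  "(\<And>p q. p \<in> W \<Longrightarrow> q \<in> W \<Longrightarrow> p \<noteq> q \<Longrightarrow> {p, q} \<in> E) \<Longrightarrow> \<not> disconnected_graph W E"
  unfolding disconnected_graph_def adj_in_def by (metis (mono_tags, lifting) r_into_rtranclp rtranclp.rtrancl_refl)

lemma no_full_star_cutsetI:
  assumes "\<And>u p q. u \<in> V \<Longrightarrow> p \<in> V - closed_nbhd V E u \<Longrightarrow> q \<in> V - closed_nbhd V E u \<Longrightarrow>
    p \<noteq> q \<Longrightarrow> {p, q} \<in> E"
  shows "\<not> has_full_star_cutset V E"
  unfolding has_full_star_cutset_def full_star_cutset_def
  using assms not_disconnected_if_clique by metis

lemma has_full_star_cutsetI:
  assumes "connected_graph V E" "u \<in> V" "a \<in> V" "b \<in> V"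
    "a \<notin> closed_nbhd V E u" "b \<notin> closed_nbhd V E u"
    "\<not> (adj_in (V - closed_nbhd V E u) E)\<^sup>*\<^sup>* a b"
  shows "has_full_star_cutset V E"
  using assms unfolding has_full_star_cutset_def full_star_cutset_def disconnected_graph_def
  by blast

section \<open>Paths\<close>

definition is_path :: "'a set set \<Rightarrow> 'a list \<Rightarrow> bool" where
  "is_path E ps \<longleftrightarrow> ps \<noteq> [] \<and> distinct ps \<and> (\<forall>i. Suc i < length ps \<longrightarrow> {ps ! i, ps ! Suc i} \<in> E)"

lemma is_path_snoc:
  assumes "is_path E ps" "z \<notin> set ps" "{last ps, z} \<in> E"
  shows "is_path E (ps @ [z])"
  unfolding is_path_def
proof (intro conjI allI impI)
  fix i assume i: "Suc i < length (ps @ [z])"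
  show "{(ps @ [z]) ! i, (ps @ [z]) ! Suc i} \<in> E"
  proof (cases "Suc i < length ps")
    case True then show ?thesis using assms(1) by (simp add: is_path_def nth_append)
  next
    case False
    then have "i = length ps - 1" using i by auto
    then show ?thesis using assms by (simp add: is_path_def nth_append last_conv_nth)
  qed
qed (use assms in \<open>auto simp: is_path_def\<close>)

lemma is_path_Cons:
  assumes "is_path E ps" "z \<notin> set ps" "{z, hd ps} \<in> E"
  shows "is_path E (z # ps)"
  unfolding is_path_def
proof (intro conjI allI impI)
  fix i assume "Suc i < length (z # ps)"
  then show "{(z # ps) ! i, (z # ps) ! Suc i} \<in> E"
    using assms by (cases i) (auto simp: is_path_def hd_conv_nth)
qed (use assms in \<open>auto simp: is_path_def\<close>)

lemma is_path_take: "is_path E ps \<Longrightarrow> 0 < k \<Longrightarrow> is_path E (take k ps)"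
  unfolding is_path_def by auto

lemma is_path_drop: "is_path E ps \<Longrightarrow> k < length ps \<Longrightarrow> is_path E (drop k ps)"
  unfolding is_path_def by auto

lemma is_path_reachable:
  assumes "is_path E ps" "set ps \<subseteq> W"
  shows "(adj_in W E)\<^sup>*\<^sup>* (hd ps) (last ps)"
proof -
  have "(adj_in W E)\<^sup>*\<^sup>* (ps ! 0) (ps ! j)" if "j < length ps" for j
    using that
  proof (induction j)
    case (Suc j)
    then have "adj_in W E (ps ! j) (ps ! Suc j)"
      using assms by (auto simp: is_path_def adj_in_def)
    then show ?case using Suc by auto
  qed simp
  then show ?thesis
    using assms(1) by (simp add: is_path_def hd_conv_nth last_conv_nth)
qed

lemma reachable_imp_path:
  assumes "(adj_in W E)\<^sup>*\<^sup>* a b" "a \<in> W"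
  shows "\<exists>ps. is_path E ps \<and> set ps \<subseteq> W \<and> hd ps = a \<and> last ps = b"
  using assms
proof (induction rule: rtranclp_induct)
  case base then show ?case by (intro exI[of _ "[a]"]) (auto simp: is_path_def)
next
  case (step y z)
  then obtain ps where ps: "is_path E ps" "set ps \<subseteq> W" "hd ps = a" "last ps = y" by auto
  show ?case
  proof (cases "z \<in> set ps")
    case True
    then obtain k where k: "k < length ps" "ps ! k = z" by (auto simp: in_set_conv_nth)
    have "is_path E (take (Suc k) ps)" using ps(1) by (auto simp: is_path_def)
    moreover have "hd (take (Suc k) ps) = a" using ps k by (metis hd_take zero_less_Suc)
    moreover have "last (take (Suc k) ps) = z" using k by (simp add: take_Suc_conv_app_nth)
    ultimately show ?thesis using ps(2) by (intro exI[of _ "take (Suc k) ps"]) (auto dest: in_set_takeD)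
  next
    case False
    then show ?thesis
      using ps step.hyps(2) is_path_snoc[of E ps z]
      by (intro exI[of _ "ps @ [z]"]) (auto simp: adj_in_def is_path_def)
  qed
qed

lemma is_path_interior_neighbours:
  assumes "is_path E ps" "set ps \<subseteq> W" "0 < i" "Suc i < length ps"
  shows "ps ! (i - 1) \<in> nbhd W E (ps ! i)" "ps ! Suc i \<in> nbhd W E (ps ! i)"
    "ps ! (i - 1) \<noteq> ps ! Suc i"
proof -
  obtain j where j: "i = Suc j" using assms(3) gr0_implies_Suc by blast
  then show "ps ! (i - 1) \<in> nbhd W E (ps ! i)" "ps ! Suc i \<in> nbhd W E (ps ! i)"
    using assms by (auto simp: nbhd_def is_path_def insert_commute)
  show "ps ! (i - 1) \<noteq> ps ! Suc i"
    using assms by (simp add: is_path_def nth_eq_iff_index_eq)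
qed

lemma is_path_interior_degree:
  assumes "finite W" "is_path E ps" "set ps \<subseteq> W" "0 < i" "Suc i < length ps"
  shows "2 \<le> degree W E (ps ! i)"
proof -
  let ?N = "nbhd W E (ps ! i)"
  have "{ps ! (i - 1), ps ! Suc i} \<subseteq> ?N" "finite ?N"
    using is_path_interior_neighbours[OF assms(2-)] assms(1) by (auto simp: nbhd_def)
  then have "card {ps ! (i - 1), ps ! Suc i} \<le> card ?N" by (rule card_mono[rotated])
  then show ?thesis
    using is_path_interior_neighbours(3)[OF assms(2-)] by (simp add: degree_def)
qed

lemma in_set_interior:
  assumes "v \<in> set ps" "v \<noteq> hd ps" "v \<noteq> last ps"
  obtains i where "0 < i" "Suc i < length ps" "ps ! i = v"
proof -
  obtain i where i: "i < length ps" "ps ! i = v" using assms(1) by (auto simp: in_set_conv_nth)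
  have "ps \<noteq> []" using assms(1) by auto
  then have "i \<noteq> 0" "i \<noteq> length ps - 1"
    using i assms(2,3) hd_conv_nth last_conv_nth by metis+
  then show ?thesis using i that by simp
qed

lemma leaf_on_path_is_end:
  assumes "finite W" "is_path E ps" "set ps \<subseteq> W" "v \<in> leaves W E" "v \<in> set ps"
  shows "v = hd ps \<or> v = last ps"
proof (rule ccontr)
  assume "\<not> (v = hd ps \<or> v = last ps)"
  then obtain i where "0 < i" "Suc i < length ps" "ps ! i = v"
    using in_set_interior[OF assms(5)] by blast
  then have "2 \<le> degree W E v" using is_path_interior_degree[OF assms(1-3)] by blast
  then show False using assms(4) by (simp add: leaves_def)
qed

lemma length_path_le_card:
  "finite V \<Longrightarrow> is_path E ps \<Longrightarrow> set ps \<subseteq> V \<Longrightarrow> length ps \<le> card V"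
  by (metis card_mono distinct_card is_path_def)

lemma ex_longest_path:
  assumes "finite V" "V \<noteq> {}"
  shows "\<exists>ps. is_path E ps \<and> set ps \<subseteq> V \<and>
    (\<forall>qs. is_path E qs \<and> set qs \<subseteq> V \<longrightarrow> length qs \<le> length ps)"
proof -
  obtain c where "c \<in> V" using assms(2) by auto
  then have "is_path E [c] \<and> set [c] \<subseteq> V" by (simp add: is_path_def)
  moreover have "\<forall>qs. is_path E qs \<and> set qs \<subseteq> V \<longrightarrow> length qs < Suc (card V)"
    by (blast intro: le_imp_less_Suc length_path_le_card[OF assms(1)])
  ultimately show ?thesis
    using ex_has_greatest_nat[of "\<lambda>ps. is_path E ps \<and> set ps \<subseteq> V" "[c]" length] by blast
qed

lemma ex_maximal_path_extension:
  assumes fin: "finite V" and ps: "is_path E ps" "set ps \<subseteq> V"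
  shows "\<exists>zs. is_path E (ps @ zs) \<and> set (ps @ zs) \<subseteq> V \<and>
    (\<forall>n\<in>V. {last (ps @ zs), n} \<in> E \<longrightarrow> n \<in> set (ps @ zs))"
proof -
  let ?P = "\<lambda>zs. is_path E (ps @ zs) \<and> set (ps @ zs) \<subseteq> V"
  have "?P []" using ps by simp
  moreover have "\<forall>zs. ?P zs \<longrightarrow> length zs < Suc (card V)"
  proof (intro allI impI)
    fix zs assume "?P zs"
    then have "length (ps @ zs) \<le> card V" using length_path_le_card[OF fin] by blast
    then show "length zs < Suc (card V)" by simp
  qed
  ultimately obtain zs where zs: "?P zs" and max: "\<And>ys. ?P ys \<Longrightarrow> length ys \<le> length zs"
    using ex_has_greatest_nat[of ?P "[]" length] by blast
  have "n \<in> set (ps @ zs)" if "n \<in> V" "{last (ps @ zs), n} \<in> E" for n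
  proof (rule ccontr)
    assume "n \<notin> set (ps @ zs)"
    then have "?P (zs @ [n])" using zs that is_path_snoc[of E "ps @ zs" n] by simp
    then show False using max[of "zs @ [n]"] by simp
  qed
  then show ?thesis using zs by blast
qed

section \<open>Forests\<close>

lemma acyclic_no_chord:
  assumes ac: "acyclic_graph V E" and ps: "is_path E ps" "set ps \<subseteq> V"
    and ij: "i + 2 \<le> j" "j < length ps"
  shows "{ps ! i, ps ! j} \<notin> E"
proof
  assume chord: "{ps ! i, ps ! j} \<in> E"
  \<comment> \<open>the segment from i to j together with the chord is a cycle\<close>
  define xs where "xs = map (\<lambda>k. ps ! (i + k)) [0..<Suc (j - i)]"
  have len: "length xs = Suc (j - i)" by (simp add: xs_def)
  have nth: "xs ! k = ps ! (i + k)" if "k < Suc (j - i)" for k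
    using that unfolding xs_def by (simp del: upt_Suc)
  have "distinct xs" unfolding distinct_conv_nth
  proof (intro allI impI)
    fix k l assume "k < length xs" "l < length xs" "k \<noteq> l"
    then show "xs ! k \<noteq> xs ! l"
      using ps(1) ij by (simp add: len nth is_path_def nth_eq_iff_index_eq)
  qed
  moreover have "set xs \<subseteq> V" using ps(2) ij by (auto simp: xs_def)
  moreover have "{xs ! k, xs ! ((k + 1) mod length xs)} \<in> E" if k: "k < length xs" for k
  proof (cases "k + 1 < length xs")
    case True
    then have "xs ! k = ps ! (i + k)" "xs ! Suc k = ps ! Suc (i + k)" "Suc (i + k) < length ps"
      using len nth ij by auto
    moreover have "(k + 1) mod length xs = Suc k" using True by simp
    ultimately show ?thesis using ps(1) by (simp add: is_path_def)
  next
    case False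
    then have "k = j - i" using k len by simp
    moreover have "(k + 1) mod length xs = 0" using len \<open>k = j - i\<close> by simp
    ultimately show ?thesis using nth[of k] nth[of 0] ij chord by (simp add: insert_commute)
  qed
  moreover have "length xs \<ge> 3" using len ij by simp
  ultimately have "length xs \<ge> 3 \<and> distinct xs \<and> set xs \<subseteq> V \<and>
      (\<forall>k < length xs. {xs ! k, xs ! ((k + 1) mod length xs)} \<in> E)" by blast
  with ac show False unfolding acyclic_graph_def by blast
qed

lemma acyclic_no_triangle:
  assumes "acyclic_graph V E" "a \<in> V" "b \<in> V" "c \<in> V" "distinct [a, b, c]"
    "{a, b} \<in> E" "{b, c} \<in> E"
  shows "{a, c} \<notin> E"
proof -
  have "is_path E [a, b, c]"
    using assms(5-) by (auto simp: is_path_def less_Suc_eq)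
  then show ?thesis
    using acyclic_no_chord[OF assms(1), of "[a, b, c]" 0 2] assms(2-4) by simp
qed

lemma acyclic_separates_neighbours:
  assumes ac: "acyclic_graph V E" and W: "W \<subseteq> V - {y}" "y \<in> V"
    and e: "{y, a} \<in> E" "{y, b} \<in> E" "a \<noteq> b" "a \<in> W"
  shows "\<not> (adj_in W E)\<^sup>*\<^sup>* a b"
proof
  assume "(adj_in W E)\<^sup>*\<^sup>* a b"
  then obtain ps where ps: "is_path E ps" "set ps \<subseteq> W" "hd ps = a" "last ps = b"
    using reachable_imp_path e(4) by metis
  have "ps \<noteq> []" using ps(1) by (simp add: is_path_def)
  then have two: "2 \<le> length ps" using ps(3,4) e(3) by (cases ps) (auto simp: Suc_le_eq split: if_split_asm)
  have "is_path E (y # ps)" using ps W e(1) by (intro is_path_Cons) auto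
  moreover have "set (y # ps) \<subseteq> V" using ps(2) W by auto
  ultimately have "{(y # ps) ! 0, (y # ps) ! length ps} \<notin> E"
    using two by (intro acyclic_no_chord[OF ac]) auto
  then show False using e(2) ps(4) \<open>ps \<noteq> []\<close> by (simp add: last_conv_nth)
qed

lemma maximal_path_end_is_leaf:
  assumes g: "graph V E" and ac: "acyclic_graph V E" and ps: "is_path E ps" "set ps \<subseteq> V"
    and two: "2 \<le> length ps" and max: "\<forall>n\<in>V. {last ps, n} \<in> E \<longrightarrow> n \<in> set ps"
  shows "last ps \<in> leaves V E"
proof -
  define k where "k = length ps - 2"
  have len: "length ps = Suc (Suc k)" using two by (simp add: k_def)
  have last: "last ps = ps ! Suc k" using len by (cases "ps = []") (auto simp: last_conv_nth)
  have "nbhd V E (last ps) = {ps ! k}"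
  proof (intro equalityI subsetI)
    fix n assume "n \<in> nbhd V E (last ps)"
    then have n: "n \<in> V" "{ps ! Suc k, n} \<in> E" using last by (auto simp: nbhd_def)
    then obtain j where j: "j < length ps" "ps ! j = n"
      using max last by (auto simp: in_set_conv_nth)
    have "j \<noteq> Suc k" using j(2) n(2) graph_no_loop[OF g] by blast
    moreover have "\<not> j + 2 \<le> Suc k"
      using acyclic_no_chord[OF ac ps, of j "Suc k"] len j(2) n(2) by (auto simp: insert_commute)
    ultimately show "n \<in> {ps ! k}" using j len by (simp add: le_less_Suc_eq not_le)
  next
    fix n assume "n \<in> {ps ! k}"
    moreover have "{ps ! k, ps ! Suc k} \<in> E" using ps(1) len by (simp add: is_path_def)
    ultimately show "n \<in> nbhd V E (last ps)"
      using ps(2) len last by (auto simp: nbhd_def insert_commute)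
  qed
  moreover have "last ps \<in> V" using ps(2) len by (metis last_in_set length_0_conv nat.distinct(1) subsetD)
  ultimately show ?thesis by (simp add: leaves_def degree_def)
qed

lemma acyclic_reaches_leaf_avoiding:
  assumes g: "graph V E" and ac: "acyclic_graph V E" and cn: "connected_graph V E"
    and u: "u \<in> V" and p: "p \<in> V - closed_nbhd V E u"
  shows "\<exists>l \<in> leaves V E - closed_nbhd V E u. (adj_in (V - closed_nbhd V E u) E)\<^sup>*\<^sup>* p l"
proof -
  let ?W = "V - closed_nbhd V E u"
  have pV: "p \<in> V" "p \<noteq> u" "{u, p} \<notin> E" using p by (auto simp: in_closed_nbhd_iff)
  have fin: "finite V" using g by (simp add: graph_def)
  have "(adj_in V E)\<^sup>*\<^sup>* u p" using cn u pV(1) by (simp add: connected_graph_def)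
  from reachable_imp_path[OF this u]
  obtain cs where cs: "is_path E cs" "set cs \<subseteq> V" "hd cs = u" "last cs = p" by blast
  \<comment> \<open>extend the path from u through p until it gets stuck, necessarily at a leaf\<close>
  obtain zs where ext: "is_path E (cs @ zs)" "set (cs @ zs) \<subseteq> V"
    "\<forall>n\<in>V. {last (cs @ zs), n} \<in> E \<longrightarrow> n \<in> set (cs @ zs)"
    using ex_maximal_path_extension[OF fin cs(1,2)] by blast
  define qs where "qs = cs @ zs"
  then have qs: "is_path E qs" "set qs \<subseteq> V" and max: "\<forall>n\<in>V. {last qs, n} \<in> E \<longrightarrow> n \<in> set qs"
    using ext by simp_all
  have "cs \<noteq> []" using cs(1) by (simp add: is_path_def)
  then obtain k where ksuc: "length cs = Suc k" by (cases cs) auto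
  have q0: "qs ! 0 = u" using cs(3) \<open>cs \<noteq> []\<close> ksuc by (simp add: qs_def hd_conv_nth nth_append)
  have qk: "qs ! k = p" using cs(4) \<open>cs \<noteq> []\<close> ksuc by (simp add: qs_def last_conv_nth nth_append)
  have kq: "k < length qs" using ksuc by (simp add: qs_def)
  have "k \<noteq> 0" using qk q0 pV(2) by metis
  moreover have "k \<noteq> 1"
  proof
    assume "k = 1"
    then have "{qs ! 0, qs ! Suc 0} \<in> E" using qs(1) kq by (simp add: is_path_def)
    then show False using q0 qk \<open>k = 1\<close> pV(3) by simp
  qed
  ultimately have k2: "2 \<le> k" by simp
  have leaf: "last qs \<in> leaves V E"
    using maximal_path_end_is_leaf[OF g ac qs] max k2 kq by simp
  \<comment> \<open>from the third vertex on, the path avoids N[u], since a tree path has no chords\<close>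
  have tail: "set (drop k qs) \<subseteq> ?W"
  proof
    fix v assume "v \<in> set (drop k qs)"
    then obtain i where i: "i < length qs - k" "qs ! (k + i) = v" by (auto simp: in_set_conv_nth)
    define j where "j = k + i"
    have j: "k \<le> j" "j < length qs" "qs ! j = v" using i by (auto simp: j_def)
    have "qs ! j \<noteq> qs ! 0" using qs(1) j(1,2) k2 by (simp add: is_path_def nth_eq_iff_index_eq)
    moreover have "{qs ! 0, qs ! j} \<notin> E"
      using acyclic_no_chord[OF ac qs, of 0 j] j k2 by simp
    moreover have "qs ! j \<in> V" using qs(2) j(2) nth_mem by blast
    ultimately show "v \<in> ?W" using j q0 by (auto simp: in_closed_nbhd_iff)
  qed
  have "last (drop k qs) \<in> set (drop k qs)" using kq by (simp del: last_drop)
  then have "last qs \<in> ?W" using tail kq by auto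
  moreover have "(adj_in ?W E)\<^sup>*\<^sup>* (hd (drop k qs)) (last (drop k qs))"
    using is_path_reachable[OF is_path_drop[OF qs(1) kq] tail] .
  then have "(adj_in ?W E)\<^sup>*\<^sup>* p (last qs)" using qk kq by (simp add: hd_drop_conv_nth)
  ultimately show ?thesis using leaf by blast
qed

lemma leaf_neighbour_not_leaf:
  assumes cn: "connected_graph V E" and card: "3 \<le> card V"
    and v: "v \<in> leaves V E" and w: "w \<in> nbhd V E v"
  shows "w \<notin> leaves V E"
proof
  \<comment> \<open>two adjacent leaves form a whole component\<close>
  assume w_leaf: "w \<in> leaves V E"
  have vV: "v \<in> V" using v by (simp add: leaves_def)
  have nv: "nbhd V E v = {w}" using leaf_nbhd[OF v] w by auto
  have nw: "nbhd V E w = {v}" using leaf_nbhd[OF w_leaf] nbhd_sym[OF vV w] by auto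
  have "{v, w} = V"
  proof (rule connected_closed_subset_eq[OF cn])
    fix a b assume "a \<in> {v, w}" "b \<in> V" "{a, b} \<in> E"
    then have "b \<in> nbhd V E a" by (simp add: nbhd_def)
    then show "b \<in> {v, w}" using \<open>a \<in> {v, w}\<close> nv nw by auto
  qed (use vV w in \<open>auto simp: nbhd_def\<close>)
  moreover have "card {v, w} \<le> 2" by (cases "v = w") auto
  ultimately show False using card by simp
qed

lemma acyclic_spanning_path_is_path_graph:
  assumes g: "graph V E" and ac: "acyclic_graph V E" and ps: "is_path E ps" "set ps = V"
  shows "path_graph V E"
proof -
  have "E = {{ps ! i, ps ! Suc i} | i. Suc i < length ps}"
  proof (intro equalityI subsetI)
    fix e assume "e \<in> E"
    then obtain a b where ab: "e = {a, b}" "a \<noteq> b" "a \<in> V" "b \<in> V"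
      using g by (auto simp: graph_def)
    then obtain k l where kl: "k < length ps" "l < length ps" "ps ! k = a" "ps ! l = b"
      using ps(2) by (metis in_set_conv_nth)
    have "k \<noteq> l" using ab kl by auto
    define i j where "i = min k l" and "j = max k l"
    have e: "e = {ps ! i, ps ! j}" "i < j" "j < length ps"
      using ab kl \<open>k \<noteq> l\<close> by (auto simp: i_def j_def min_def max_def insert_commute)
    then have "\<not> i + 2 \<le> j" using acyclic_no_chord[OF ac ps(1)] ps(2) \<open>e \<in> E\<close> by blast
    then have "j = Suc i" using e(2) by linarith
    then show "e \<in> {{ps ! i, ps ! Suc i} | i. Suc i < length ps}" using e by blast
  next
    fix e assume "e \<in> {{ps ! i, ps ! Suc i} | i. Suc i < length ps}"
    then show "e \<in> E" using ps(1) by (auto simp: is_path_def)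
  qed
  then show ?thesis using ps unfolding path_graph_def is_path_def by blast
qed

section \<open>Trees\<close>

lemma path_edges_eq_zip:
  "{{xs ! i, xs ! Suc i} | i. Suc i < length xs} = (\<lambda>(a, b). {a, b}) ` set (zip xs (tl xs))"
  (is "?L = ?R")
proof
  show "?L \<subseteq> ?R"
  proof
    fix e assume "e \<in> ?L"
    then obtain i where e: "e = {xs ! i, xs ! Suc i}" "Suc i < length xs" by blast
    then have "(xs ! i, xs ! Suc i) \<in> set (zip xs (tl xs))"
      by (auto simp: set_zip nth_tl intro!: exI[of _ i])
    then show "e \<in> ?R" using e(1) by (simp add: image_iff) blast
  qed
qed (auto simp: set_zip nth_tl)

lemma short_path_graph_no_full_star_cutset:
  assumes "path_graph V E" "card V \<le> 4"
  shows "\<not> has_full_star_cutset V E"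
proof -
  \<comment> \<open>by cases on the at most four vertices: the rest of a closed neighbourhood is a clique\<close>
  obtain xs where xs: "xs \<noteq> []" "distinct xs" "set xs = V"
    "E = (\<lambda>(a, b). {a, b}) ` set (zip xs (tl xs))"
    using assms(1) by (auto simp: path_graph_def path_edges_eq_zip)
  have "length xs \<le> 4" using assms(2) xs distinct_card by metis
  then consider a where "xs = [a]" | a b where "xs = [a, b]" | a b c where "xs = [a, b, c]"
    | a b c d where "xs = [a, b, c, d]"
    using xs(1) by (auto simp: le_Suc_eq length_Suc_conv numeral_eq_Suc)
  then show ?thesis
    by cases (use xs in \<open>intro no_full_star_cutsetI; auto simp: in_closed_nbhd_iff doubleton_eq_iff\<close>)+
qed

lemma tree_full_star_cutset_if_three_neighbours:
  assumes t: "tree V E" and e: "{y, u} \<in> E" "{y, a} \<in> E" "{y, b} \<in> E"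
    and d: "distinct [u, a, b]"
  shows "has_full_star_cutset V E"
proof -
  have g: "graph V E" and ac: "acyclic_graph V E" and cn: "connected_graph V E"
    using t by (auto simp: tree_def)
  have V: "y \<in> V" "u \<in> V" "a \<in> V" "b \<in> V" using graph_edge_vertices[OF g] e by blast+
  have "y \<noteq> u" "y \<noteq> a" "y \<noteq> b" using graph_no_loop[OF g] e by auto
  then have "{u, a} \<notin> E" "{u, b} \<notin> E"
    using acyclic_no_triangle[OF ac, of u y a] acyclic_no_triangle[OF ac, of u y b] V e d
    by (auto simp: insert_commute)
  then have out: "a \<notin> closed_nbhd V E u" "b \<notin> closed_nbhd V E u"
    using d by (auto simp: in_closed_nbhd_iff)
  have "y \<in> closed_nbhd V E u" using V e by (auto simp: in_closed_nbhd_iff insert_commute)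
  then have "\<not> (adj_in (V - closed_nbhd V E u) E)\<^sup>*\<^sup>* a b"
    using out V e d by (intro acyclic_separates_neighbours[OF ac]) auto
  then show ?thesis using cn V out by (intro has_full_star_cutsetI)
qed

lemma tree_full_star_cutset_if_path5:
  assumes t: "tree V E" and p: "is_path E [a, b, c, d, e]"
  shows "has_full_star_cutset V E"
proof -
  have g: "graph V E" and ac: "acyclic_graph V E" and cn: "connected_graph V E"
    using t by (auto simp: tree_def)
  have "{[a, b, c, d, e] ! i, [a, b, c, d, e] ! Suc i} \<in> E" if "i < 4" for i
    using p that by (simp add: is_path_def)
  from this[of 0] this[of 1] this[of 2] this[of 3]
  have edges: "{a, b} \<in> E" "{b, c} \<in> E" "{c, d} \<in> E" "{d, e} \<in> E"
    by (simp_all add: numeral_eq_Suc)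
  then have edges': "{b, a} \<in> E" "{c, b} \<in> E" "{d, c} \<in> E" "{e, d} \<in> E"
    by (simp_all add: insert_commute)
  have dist: "distinct [a, b, c, d, e]" using p by (simp add: is_path_def)
  have V: "a \<in> V" "b \<in> V" "c \<in> V" "d \<in> V" "e \<in> V"
    using graph_edge_vertices[OF g] edges by blast+
  have "{c, a} \<notin> E" "{c, e} \<notin> E"
    using acyclic_no_triangle[OF ac, of a b c] acyclic_no_triangle[OF ac, of c d e] V edges dist
    by (simp_all add: insert_commute)
  then have out: "a \<notin> closed_nbhd V E c" "e \<notin> closed_nbhd V E c"
    using dist by (auto simp: in_closed_nbhd_iff)
  have "\<not> (adj_in (V - closed_nbhd V E c) E)\<^sup>*\<^sup>* a e"
  proof
    \<comment> \<open>a path from a to e avoiding N[c] would close a cycle through b\<close>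
    let ?W = "V - {b}"
    assume ae: "(adj_in (V - closed_nbhd V E c) E)\<^sup>*\<^sup>* a e"
    have "V - closed_nbhd V E c \<subseteq> ?W"
      using edges' V by (auto simp: in_closed_nbhd_iff)
    from reachable_mono[OF this order_refl ae] have "(adj_in ?W E)\<^sup>*\<^sup>* a e" .
    moreover have "adj_in ?W E e d" "adj_in ?W E d c"
      using V edges' dist by (auto simp: adj_in_def)
    ultimately have "(adj_in ?W E)\<^sup>*\<^sup>* a c" by (metis rtranclp.rtrancl_into_rtrancl)
    then show False
      using acyclic_separates_neighbours[OF ac, of ?W b a c] V edges edges' dist by auto
  qed
  then show ?thesis using cn V out by (intro has_full_star_cutsetI)
qed

lemma tree_path_length_le_4:
  assumes t: "tree V E" and nc: "\<not> has_full_star_cutset V E" and ps: "is_path E ps"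
  shows "length ps \<le> 4"
proof (rule ccontr)
  assume "\<not> length ps \<le> 4"
  then have "Suc (Suc (Suc (Suc (Suc 0)))) \<le> length ps" by simp
  then obtain a b c d e rest where "ps = a # b # c # d # e # rest"
    by (auto simp: Suc_le_length_iff)
  then have "is_path E [a, b, c, d, e]" using is_path_take[OF ps, of 5] by simp
  then show False using tree_full_star_cutset_if_path5[OF t] nc by blast
qed

lemma tree_longest_path_closed:
  assumes t: "tree V E" and nc: "\<not> has_full_star_cutset V E"
    and qs: "is_path E qs" "set qs \<subseteq> V"
    and longest: "\<And>ps. is_path E ps \<Longrightarrow> set ps \<subseteq> V \<Longrightarrow> length ps \<le> length qs"
    and a: "a \<in> set qs" and b: "b \<in> V" "{a, b} \<in> E"
  shows "b \<in> set qs"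
proof (rule ccontr)
  assume nb: "b \<notin> set qs"
  obtain i where i: "i < length qs" "qs ! i = a" using a by (auto simp: in_set_conv_nth)
  consider "i = length qs - 1" | "i = 0" | "0 < i \<and> Suc i < length qs" using i by linarith
  then show False
  proof cases
    case 1
    then have "is_path E (qs @ [b])"
      using qs(1) nb b i by (intro is_path_snoc) (auto simp: last_conv_nth is_path_def)
    then show False using longest[of "qs @ [b]"] qs(2) b by simp
  next
    case 2
    have "{b, a} \<in> E" using b(2) by (simp add: insert_commute)
    then have "is_path E (b # qs)"
      using qs(1) nb i 2 by (intro is_path_Cons) (auto simp: hd_conv_nth is_path_def)
    then show False using longest[of "b # qs"] qs(2) b by simp
  next
    case 3
    then have "qs ! (i - 1) \<in> nbhd V E a" "qs ! Suc i \<in> nbhd V E a" "qs ! (i - 1) \<noteq> qs ! Suc i"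
      using is_path_interior_neighbours[OF qs] i by auto
    moreover have "qs ! (i - 1) \<in> set qs" "qs ! Suc i \<in> set qs" using 3 by auto
    ultimately have "{a, qs ! (i - 1)} \<in> E" "{a, qs ! Suc i} \<in> E"
      "distinct [qs ! (i - 1), qs ! Suc i, b]"
      using nb by (auto simp: nbhd_def)
    then have "has_full_star_cutset V E"
      by (rule tree_full_star_cutset_if_three_neighbours[OF t _ _ b(2)])
    then show False using nc by simp
  qed
qed

lemma tree_without_full_star_cutset_is_short_path:
  assumes t: "tree V E" and nc: "\<not> has_full_star_cutset V E"
  shows "path_graph V E \<and> card V \<le> 4"
proof -
  have g: "graph V E" and ac: "acyclic_graph V E" and cn: "connected_graph V E"
    using t by (auto simp: tree_def)
  have "finite V" "V \<noteq> {}" using g cn by (auto simp: graph_def connected_graph_def)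
  then obtain qs where qs: "is_path E qs" "set qs \<subseteq> V"
    and longest: "\<And>ps. is_path E ps \<Longrightarrow> set ps \<subseteq> V \<Longrightarrow> length ps \<le> length qs"
    using ex_longest_path by metis
  have "hd qs \<in> set qs" using qs(1) by (simp add: is_path_def)
  then have "set qs = V"
    using tree_longest_path_closed[OF t nc qs longest]
    by (rule connected_closed_subset_eq[OF cn qs(2)])
  then show ?thesis
    using acyclic_spanning_path_is_path_graph[OF g ac qs(1)] distinct_card[of qs] qs(1)
      tree_path_length_le_4[OF t nc qs(1)]
    by (auto simp: is_path_def)
qed

lemma tree_no_full_star_cutset_iff:
  "tree V E \<Longrightarrow> \<not> has_full_star_cutset V E \<longleftrightarrow> path_graph V E \<and> card V \<le> 4"
  using tree_without_full_star_cutset_is_short_path short_path_graph_no_full_star_cutset by blast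

section \<open>Chandeliers\<close>

locale chandelier_graph =
  fixes V :: "'a set" and E :: "'a set set" and x :: 'a
  assumes chandelier: "chandelier V E x"
begin

abbreviation T :: "'a set" where "T \<equiv> V - {x}"
abbreviation ET :: "'a set set" where "ET \<equiv> {e \<in> E. x \<notin> e}"

lemma graph: "graph V E" and apex_in: "x \<in> V" and tree: "tree T ET" and card_T: "3 \<le> card T"
  and apex_nbhd: "nbhd V E x = leaves T ET"
  using chandelier by (auto simp: chandelier_def)

lemma finite_T: "finite T" and graph_T: "graph T ET" and acyclic_T: "acyclic_graph T ET"
  and connected_T: "connected_graph T ET"
  using graph tree by (auto simp: graph_def tree_def)

lemma adj_in_tree_eq: "W \<subseteq> T \<Longrightarrow> adj_in W ET = adj_in W E"
  by (auto simp: adj_in_def fun_eq_iff)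

lemma nbhd_tree_eq: "u \<in> T \<Longrightarrow> nbhd T ET u = nbhd V E u - {x}"
  by (auto simp: nbhd_def)

lemma apex_adj_iff_leaf:
  assumes "u \<in> T"
  shows "x \<in> nbhd V E u \<longleftrightarrow> u \<in> leaves T ET"
proof -
  have "x \<in> nbhd V E u \<longleftrightarrow> u \<in> nbhd V E x"
    using assms apex_in by (auto simp: nbhd_def insert_commute)
  then show ?thesis using apex_nbhd by simp
qed

lemma connected_if_leaf:
  assumes "v \<in> leaves T ET"
  shows "connected_graph V E"
proof -
  have vT: "v \<in> T" using assms by (simp add: leaves_def)
  have reach: "(adj_in V E)\<^sup>*\<^sup>* p v" if "p \<in> V" for p
  proof (cases "p = x")
    case True
    have "x \<in> nbhd V E v" using apex_adj_iff_leaf[OF vT] assms by simp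
    then have "adj_in V E x v" using apex_in vT by (simp add: adj_in_def nbhd_def insert_commute)
    then show ?thesis using True by (simp add: r_into_rtranclp)
  next
    case False
    then have "(adj_in T ET)\<^sup>*\<^sup>* p v" using connected_T that vT by (simp add: connected_graph_def)
    then show ?thesis by (rule reachable_mono[rotated 2]) auto
  qed
  have "v \<in> V" using vT by simp
  then show ?thesis
    using not_disconnected_if_reach_hub[OF _ reach] by (auto simp: connected_graph_iff)
qed

lemma not_disconnected_if_paths_inside:
  assumes W: "W \<subseteq> T"
    and inside: "\<And>ps. is_path ET ps \<Longrightarrow> set ps \<subseteq> T \<Longrightarrow> hd ps \<in> W \<Longrightarrow> last ps \<in> W \<Longrightarrow>
      set ps \<subseteq> W"
  shows "\<not> disconnected_graph W E"
proof -
  have "(adj_in W E)\<^sup>*\<^sup>* p q" if pq: "p \<in> W" "q \<in> W" for p q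
  proof -
    have "(adj_in T ET)\<^sup>*\<^sup>* p q" using connected_T pq W by (auto simp: connected_graph_def)
    from reachable_imp_path[OF this subsetD[OF W pq(1)]]
    obtain ps where ps: "is_path ET ps" "set ps \<subseteq> T" "hd ps = p" "last ps = q" by blast
    then have "(adj_in W ET)\<^sup>*\<^sup>* p q"
      using is_path_reachable[OF ps(1) inside[OF ps(1,2)]] pq by simp
    then show ?thesis using adj_in_tree_eq[OF W] by simp
  qed
  then show ?thesis by (auto simp: disconnected_graph_def)
qed

lemma not_disconnected_without_apex_nbhd: "\<not> disconnected_graph (V - closed_nbhd V E x) E"
proof -
  have W: "V - closed_nbhd V E x = T - leaves T ET" using apex_nbhd by (auto simp: closed_nbhd_def)
  show ?thesis unfolding W
  proof (rule not_disconnected_if_paths_inside)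
    fix ps assume ps: "is_path ET ps" "set ps \<subseteq> T"
      and "hd ps \<in> T - leaves T ET" "last ps \<in> T - leaves T ET"
    then show "set ps \<subseteq> T - leaves T ET" using leaf_on_path_is_end[OF finite_T ps(1,2)] by blast
  qed auto
qed

lemma not_disconnected_without_leaf_nbhd:
  assumes u: "u \<in> leaves T ET" and deg2: "\<And>w. w \<in> nbhd T ET u \<Longrightarrow> degree T ET w = 2"
  shows "\<not> disconnected_graph (V - closed_nbhd V E u) E"
proof -
  have uT: "u \<in> T" using u by (simp add: leaves_def)
  obtain w where nu: "nbhd T ET u = {w}" using leaf_nbhd[OF u] by blast
  then have unw: "u \<in> nbhd T ET w" using nbhd_sym[OF uT] by simp
  have "finite (nbhd T ET w)" using finite_T by (simp add: nbhd_def)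
  moreover have "card (nbhd T ET w) = 2" using deg2 nu by (simp add: degree_def)
  ultimately have "card (nbhd T ET w - {u}) = 1" using unw by simp
  then obtain w' where "nbhd T ET w - {u} = {w'}" by (auto simp: card_1_singleton_iff)
  then have nw: "nbhd T ET w = {u, w'}" using unw by auto
  have "nbhd V E u = {w, x}"
    using nbhd_tree_eq[OF uT] apex_adj_iff_leaf[OF uT] u nu by auto
  then have W: "V - closed_nbhd V E u = T - {u, w}" by (auto simp: closed_nbhd_def)
  show ?thesis unfolding W
  proof (rule not_disconnected_if_paths_inside)
    fix ps assume ps: "is_path ET ps" "set ps \<subseteq> T" "hd ps \<in> T - {u, w}"
      "last ps \<in> T - {u, w}"
    have nou: "u \<notin> set ps" using leaf_on_path_is_end[OF finite_T ps(1,2) u] ps(3,4) by blast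
    moreover have "w \<notin> set ps"
    proof
      \<comment> \<open>w would be an interior vertex, so both of its neighbours u and w' would be on the path\<close>
      assume "w \<in> set ps"
      moreover have "w \<noteq> hd ps" "w \<noteq> last ps" using ps(3,4) by auto
      ultimately obtain i where int: "0 < i" "Suc i < length ps" and i: "ps ! i = w"
        by (rule in_set_interior)
      then have "ps ! (i - 1) \<in> {u, w'}" "ps ! Suc i \<in> {u, w'}" "ps ! (i - 1) \<noteq> ps ! Suc i"
        using is_path_interior_neighbours[OF ps(1,2)] i nw by auto
      then have "u \<in> {ps ! (i - 1), ps ! Suc i}" by auto
      moreover have "ps ! (i - 1) \<in> set ps" "ps ! Suc i \<in> set ps" using int by auto
      ultimately show False using nou by auto
    qed
    ultimately show "set ps \<subseteq> T - {u, w}" using ps(2) by auto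
  qed auto
qed

lemma not_disconnected_without_interior_nbhd:
  assumes uT: "u \<in> T" and nl: "u \<notin> leaves T ET"
  shows "\<not> disconnected_graph (V - closed_nbhd V E u) E"
proof -
  let ?W' = "T - closed_nbhd T ET u"
  have "x \<notin> nbhd V E u" using apex_adj_iff_leaf[OF uT] nl by simp
  then have W: "V - closed_nbhd V E u = insert x ?W'"
    using nbhd_tree_eq[OF uT] apex_in uT by (auto simp: closed_nbhd_def)
  have "(adj_in (insert x ?W') E)\<^sup>*\<^sup>* p x" if p: "p \<in> ?W'" for p
  proof -
    obtain l where l: "l \<in> leaves T ET" "l \<notin> closed_nbhd T ET u" and pl: "(adj_in ?W' ET)\<^sup>*\<^sup>* p l"
      using acyclic_reaches_leaf_avoiding[OF graph_T acyclic_T connected_T uT p] by blast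
    have lW: "l \<in> ?W'" using l by (simp add: leaves_def)
    have "(adj_in (insert x ?W') E)\<^sup>*\<^sup>* p l"
      using reachable_mono[OF _ _ pl, of "insert x ?W'" E] by blast
    moreover have "x \<in> nbhd V E l" using apex_adj_iff_leaf l by (simp add: leaves_def)
    then have "adj_in (insert x ?W') E l x" using lW by (simp add: adj_in_def nbhd_def insert_commute)
    ultimately show ?thesis by (rule rtranclp.rtrancl_into_rtrancl)
  qed
  then show ?thesis unfolding W by (intro not_disconnected_if_reach_hub) auto
qed

lemma full_star_cutset_if_not_luxury:
  assumes v: "v \<in> leaves T ET" and w: "w \<in> nbhd T ET v" and dw: "degree T ET w \<noteq> 2"
  shows "has_full_star_cutset V E"
proof -
  have vT: "v \<in> T" using v by (simp add: leaves_def)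
  have nv: "nbhd T ET v = {w}" using leaf_nbhd[OF v] w by auto
  have wT: "w \<in> T" using w by (simp add: nbhd_def)
  have vnw: "v \<in> nbhd T ET w" using nbhd_sym[OF vT w] .
  have fin: "finite (nbhd T ET w)" using finite_T by (simp add: nbhd_def)
  have "degree T ET w \<noteq> 1"
    using leaf_neighbour_not_leaf[OF connected_T card_T v w] wT by (simp add: leaves_def)
  then have "3 \<le> card (nbhd T ET w)"
    using dw vnw fin by (cases "card (nbhd T ET w)") (auto simp: degree_def)
  then have "\<not> card (nbhd T ET w - {v}) \<le> Suc 0" using fin vnw by simp
  then obtain a b where "a \<in> nbhd T ET w - {v}" "b \<in> nbhd T ET w - {v}" "a \<noteq> b"
    using card_le_Suc0_iff_eq[of "nbhd T ET w - {v}"] fin by auto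
  then have ab: "a \<in> T" "{w, a} \<in> E" "a \<noteq> v" "b \<in> T" "{w, b} \<in> E" "b \<noteq> v" "a \<noteq> b"
    by (auto simp: nbhd_def)
  have "a \<noteq> w" "b \<noteq> w" using ab graph_no_loop[OF graph] by auto
  moreover have "nbhd V E v = {w, x}"
    using nbhd_tree_eq[OF vT] apex_adj_iff_leaf[OF vT] v nv by auto
  ultimately have out: "a \<notin> closed_nbhd V E v" "b \<notin> closed_nbhd V E v"
    and sub: "V - closed_nbhd V E v \<subseteq> T - {w}"
    using ab by (auto simp: closed_nbhd_def)
  have "\<not> (adj_in (V - closed_nbhd V E v) E)\<^sup>*\<^sup>* a b"
  proof
    assume "(adj_in (V - closed_nbhd V E v) E)\<^sup>*\<^sup>* a b"
    moreover have "adj_in (T - {w}) E = adj_in (T - {w}) ET" by (rule adj_in_tree_eq[symmetric]) auto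
    ultimately have "(adj_in (T - {w}) ET)\<^sup>*\<^sup>* a b" using reachable_mono[OF sub order_refl] by metis
    moreover have "\<not> (adj_in (T - {w}) ET)\<^sup>*\<^sup>* a b"
      using ab wT \<open>a \<noteq> w\<close>
      by (intro acyclic_separates_neighbours[OF acyclic_T, of "T - {w}" w a b]) auto
    ultimately show False by contradiction
  qed
  then show ?thesis
    using connected_if_leaf[OF v] vT ab out by (intro has_full_star_cutsetI) auto
qed

theorem no_full_star_cutset_iff_luxury:
  "\<not> has_full_star_cutset V E \<longleftrightarrow> luxury_chandelier V E x"
proof
  assume "\<not> has_full_star_cutset V E"
  then show "luxury_chandelier V E x"
    using chandelier full_star_cutset_if_not_luxury by (auto simp: luxury_chandelier_def Let_def)
next
  assume "luxury_chandelier V E x"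
  then have lux: "\<And>v w. v \<in> leaves T ET \<Longrightarrow> w \<in> nbhd T ET v \<Longrightarrow> degree T ET w = 2"
    by (auto simp: luxury_chandelier_def Let_def)
  have "\<not> disconnected_graph (V - closed_nbhd V E u) E" if "u \<in> V" for u
  proof (cases "u = x")
    case False
    show ?thesis
    proof (cases "u \<in> leaves T ET")
      case True
      then show ?thesis by (intro not_disconnected_without_leaf_nbhd) (auto intro: lux)
    next
      case False
      then show ?thesis using \<open>u \<noteq> x\<close> that by (intro not_disconnected_without_interior_nbhd) auto
    qed
  qed (simp add: not_disconnected_without_apex_nbhd)
  then show "\<not> has_full_star_cutset V E"
    by (auto simp: has_full_star_cutset_def full_star_cutset_def)
qed

end

theorem mainTheorem12:
  shows "(\<forall>(V::'a set) E. tree V E \<longrightarrow>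
            (\<not> has_full_star_cutset V E \<longleftrightarrow> path_graph V E \<and> card V \<le> 4)) \<and>
         (\<forall>(V::'a set) E x. chandelier V E x \<longrightarrow>
            (\<not> has_full_star_cutset V E \<longleftrightarrow> luxury_chandelier V E x))"
  using tree_no_full_star_cutset_iff chandelier_graph.no_full_star_cutset_iff_luxury[OF chandelier_graph.intro]
  by blast

end
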